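(* Let $Q$ be a faithful quandle, $S$ a set and $\theta:Q\times Q\to\mathrm{Sym}_S$ a quandle cocycle. Then $Q\times_\theta S\cong Q\times_{\mathbf{1}}S$ if and only if $\theta$ is cohomologous to the trivial cocycle $\mathbf{1}$.
   Context: A quandle is a set $Q$ with a binary operation $*$ such that every left translation $L_x:y\mapsto x*y$ is bijective, $x*(y*z)=(x*y)*(x*z)$ and $x*x=x$. $Q$ is faithful if $L_x=L_y$ implies $x=y$. A quandle cocycle with values in $\mathrm{Sym}_S$ is $\theta:Q\times Q\to\mathrm{Sym}_S$ with $\theta_{x*y,x*z}\theta_{x,z}=\theta_{x,y*z}\theta_{y,z}$ and $\theta_{x,x}=1$; $\theta$ is cohomologous to $\mathbf{1}$ (the cocycle constantly equal to the identity) if there is $\gamma:Q\to\mathrm{Sym}_S$ with $\theta_{x,y}=\gamma_{x*y}\gamma_y^{-1}$ for all $x,y$. $Q\times_\theta S$ is the quandle on $Q\times S$ with $(x,a)*(y,b)=(x*y,\theta_{x,y}(b))$. *)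

theory Defs
  imports "HOL-Combinatorics.Permutations"
begin

definition quandle :: "'a set \<Rightarrow> ('a \<Rightarrow> 'a \<Rightarrow> 'a) \<Rightarrow> bool" where
  "quandle Q m \<longleftrightarrow>
     (\<forall>x\<in>Q. \<forall>y\<in>Q. m x y \<in> Q) \<and>
     (\<forall>x\<in>Q. bij_betw (m x) Q Q) \<and>
     (\<forall>x\<in>Q. \<forall>y\<in>Q. \<forall>z\<in>Q. m x (m y z) = m (m x y) (m x z)) \<and>
     (\<forall>x\<in>Q. m x x = x)"

definition faithful_quandle :: "'a set \<Rightarrow> ('a \<Rightarrow> 'a \<Rightarrow> 'a) \<Rightarrow> bool" where
  "faithful_quandle Q m \<longleftrightarrow>
     (\<forall>x\<in>Q. \<forall>y\<in>Q. (\<forall>z\<in>Q. m x z = m y z) \<longrightarrow> x = y)"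

text \<open>Elements of Sym_S are represented as permutations p with p permutes S.\<close>
definition quandle_cocycle ::
  "'a set \<Rightarrow> ('a \<Rightarrow> 'a \<Rightarrow> 'a) \<Rightarrow> 'b set \<Rightarrow> ('a \<Rightarrow> 'a \<Rightarrow> 'b \<Rightarrow> 'b) \<Rightarrow> bool" where
  "quandle_cocycle Q m S \<theta> \<longleftrightarrow>
     (\<forall>x\<in>Q. \<forall>y\<in>Q. \<theta> x y permutes S) \<and>
     (\<forall>x\<in>Q. \<forall>y\<in>Q. \<forall>z\<in>Q.
        \<theta> (m x y) (m x z) \<circ> \<theta> x z = \<theta> x (m y z) \<circ> \<theta> y z) \<and>
     (\<forall>x\<in>Q. \<theta> x x = id)"

definition cohomologous_to_trivial ::
  "'a set \<Rightarrow> ('a \<Rightarrow> 'a \<Rightarrow> 'a) \<Rightarrow> 'b set \<Rightarrow> ('a \<Rightarrow> 'a \<Rightarrow> 'b \<Rightarrow> 'b) \<Rightarrow> bool" where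
  "cohomologous_to_trivial Q m S \<theta> \<longleftrightarrow>
     (\<exists>\<gamma>. (\<forall>x\<in>Q. \<gamma> x permutes S) \<and>
          (\<forall>x\<in>Q. \<forall>y\<in>Q. \<theta> x y = \<gamma> (m x y) \<circ> inv (\<gamma> y)))"

definition ext_op :: "('a \<Rightarrow> 'a \<Rightarrow> 'a) \<Rightarrow> ('a \<Rightarrow> 'a \<Rightarrow> 'b \<Rightarrow> 'b) \<Rightarrow>
    'a \<times> 'b \<Rightarrow> 'a \<times> 'b \<Rightarrow> 'a \<times> 'b" where
  "ext_op m \<theta> u v = (m (fst u) (fst v), \<theta> (fst u) (fst v) (snd v))"

definition quandle_isomorphic ::
  "'c set \<Rightarrow> ('c \<Rightarrow> 'c \<Rightarrow> 'c) \<Rightarrow> 'd set \<Rightarrow> ('d \<Rightarrow> 'd \<Rightarrow> 'd) \<Rightarrow> bool" where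
  "quandle_isomorphic A p B q \<longleftrightarrow>
     (\<exists>f. bij_betw f A B \<and> (\<forall>u\<in>A. \<forall>v\<in>A. f (p u v) = q (f u) (f v)))"

end

theory Submission
  imports Defs
begin

text \<open>A coboundary \<open>\<theta>\<^sub>x\<^sub>,\<^sub>y = \<gamma>\<^sub>x\<^sub>*\<^sub>y \<gamma>\<^sub>y\<inverse>\<close> yields the isomorphism
  \<open>(x, a) \<mapsto> (x, \<gamma>\<^sub>x\<inverse> a)\<close> onto the trivial extension. Conversely, when \<open>Q\<close> is faithful,
  two elements of \<open>Q \<times>\<^sub>\<theta> S\<close> have the same left translation exactly when they lie in the same
  fibre \<open>{x} \<times> S\<close>. Isomorphisms preserve this relation, so an isomorphism \<open>f\<close> onto
  \<open>Q \<times>\<^sub>1 S\<close> has the form \<open>f (x, a) = (\<phi> x, \<delta>\<^sub>x a)\<close> with every \<open>\<delta>\<^sub>x\<close> a permutation of \<open>S\<close>.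
  Comparing second coordinates in \<open>f ((x, a) * (y, b)) = f (x, a) * f (y, b)\<close> gives
  \<open>\<delta>\<^sub>x\<^sub>*\<^sub>y \<theta>\<^sub>x\<^sub>,\<^sub>y = \<delta>\<^sub>y\<close>, so \<open>\<gamma> = \<delta>\<inverse>\<close> is the required cochain.\<close>

lemma iso_same_left_translation_iff:
  assumes bij: "bij_betw f A B"
    and hom: "\<forall>u\<in>A. \<forall>v\<in>A. f (p u v) = q (f u) (f v)"
    and closed: "\<forall>u\<in>A. \<forall>v\<in>A. p u v \<in> A"
    and u: "u \<in> A" and u': "u' \<in> A"
  shows "(\<forall>w\<in>B. q (f u) w = q (f u') w) \<longleftrightarrow> (\<forall>v\<in>A. p u v = p u' v)"
proof
  assume same: "\<forall>w\<in>B. q (f u) w = q (f u') w"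
  show "\<forall>v\<in>A. p u v = p u' v"
  proof
    fix v assume v: "v \<in> A"
    have "f (p u v) = f (p u' v)"
      using hom same u u' v bij_betwE[OF bij] by metis
    then show "p u v = p u' v"
      using bij_betw_imp_inj_on[OF bij] closed u u' v by (meson inj_onD)
  qed
next
  assume same: "\<forall>v\<in>A. p u v = p u' v"
  show "\<forall>w\<in>B. q (f u) w = q (f u') w"
  proof
    fix w assume "w \<in> B"
    then obtain v where "v \<in> A" "w = f v"
      using bij_betw_imp_surj_on[OF bij] by blast
    then show "q (f u) w = q (f u') w"
      using hom same u u' by metis
  qed
qed

lemma ext_op_closed:
  assumes "quandle Q m" and "quandle_cocycle Q m S \<theta>"
    and "u \<in> Q \<times> S" and "v \<in> Q \<times> S"
  shows "ext_op m \<theta> u v \<in> Q \<times> S"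
proof -
  have "m (fst u) (fst v) \<in> Q"
    using assms(1,3,4) unfolding quandle_def by auto
  moreover have "\<theta> (fst u) (fst v) permutes S"
    using assms(2-4) unfolding quandle_cocycle_def by auto
  ultimately show ?thesis
    using assms(4) by (auto simp: ext_op_def permutes_in_image)
qed

lemma ext_op_same_left_translation_iff:
  assumes faithful: "faithful_quandle Q m"
    and u: "u \<in> Q \<times> S" and u': "u' \<in> Q \<times> S"
  shows "(\<forall>v\<in>Q \<times> S. ext_op m \<theta> u v = ext_op m \<theta> u' v) \<longleftrightarrow> fst u = fst u'"
proof
  assume same: "\<forall>v\<in>Q \<times> S. ext_op m \<theta> u v = ext_op m \<theta> u' v"
  have "m (fst u) z = m (fst u') z" if "z \<in> Q" for z
  proof -
    have "(z, snd u) \<in> Q \<times> S"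
      using that u by (simp add: mem_Times_iff)
    then show ?thesis
      using same by (auto simp: ext_op_def)
  qed
  moreover have "fst u \<in> Q" "fst u' \<in> Q"
    using u u' by (simp_all add: mem_Times_iff)
  ultimately show "fst u = fst u'"
    using faithful unfolding faithful_quandle_def by blast
qed (simp add: ext_op_def)

lemma ext_op_iso_fst_eq_iff:
  assumes "quandle Q m" and "faithful_quandle Q m" and "quandle_cocycle Q m S \<theta>"
    and "faithful_quandle Q' m'"
    and bij: "bij_betw f (Q \<times> S) (Q' \<times> S')"
    and hom: "\<forall>u\<in>Q \<times> S. \<forall>v\<in>Q \<times> S. f (ext_op m \<theta> u v) = ext_op m' \<theta>' (f u) (f v)"
    and u: "u \<in> Q \<times> S" and u': "u' \<in> Q \<times> S"
  shows "fst (f u) = fst (f u') \<longleftrightarrow> fst u = fst u'"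
proof -
  have fu: "f u \<in> Q' \<times> S'" "f u' \<in> Q' \<times> S'"
    using bij u u' by (auto dest: bij_betwE)
  have "fst (f u) = fst (f u') \<longleftrightarrow>
      (\<forall>w\<in>Q' \<times> S'. ext_op m' \<theta>' (f u) w = ext_op m' \<theta>' (f u') w)"
    by (rule ext_op_same_left_translation_iff[OF assms(4) fu, symmetric])
  also have "\<dots> \<longleftrightarrow> (\<forall>v\<in>Q \<times> S. ext_op m \<theta> u v = ext_op m \<theta> u' v)"
    using iso_same_left_translation_iff[OF bij hom _ u u'] ext_op_closed[OF assms(1,3)]
    by blast
  also have "\<dots> \<longleftrightarrow> fst u = fst u'"
    using ext_op_same_left_translation_iff[OF assms(2) u u'] .
  finally show ?thesis .
qed

lemma bij_betw_snd_fibre: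
  assumes bij: "bij_betw f (A \<times> B) (A \<times> B)"
    and fibres: "\<forall>u\<in>A \<times> B. \<forall>u'\<in>A \<times> B. fst (f u) = fst (f u') \<longleftrightarrow> fst u = fst u'"
    and x: "x \<in> A"
  shows "bij_betw (\<lambda>b. snd (f (x, b))) B B"
  unfolding bij_betw_def
proof (intro conjI subset_antisym)
  show "inj_on (\<lambda>b. snd (f (x, b))) B"
  proof (rule inj_onI)
    fix b b' assume b: "b \<in> B" "b' \<in> B" and "snd (f (x, b)) = snd (f (x, b'))"
    moreover have "fst (f (x, b)) = fst (f (x, b'))"
      using fibres x b by auto
    ultimately have "f (x, b) = f (x, b')"
      by (simp add: prod_eq_iff)
    then show "b = b'"
      using bij_betw_imp_inj_on[OF bij] x b by (auto dest: inj_onD)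
  qed
  show "(\<lambda>b. snd (f (x, b))) ` B \<subseteq> B"
    using bij_betwE[OF bij] x by (auto simp: mem_Times_iff)
  show "B \<subseteq> (\<lambda>b. snd (f (x, b))) ` B"
  proof
    fix c assume c: "c \<in> B"
    then obtain b0 where b0: "b0 \<in> B" by blast
    have "(fst (f (x, b0)), c) \<in> A \<times> B"
      using bij_betwE[OF bij] x b0 c by (auto simp: mem_Times_iff)
    then have "(fst (f (x, b0)), c) \<in> f ` (A \<times> B)"
      using bij_betw_imp_surj_on[OF bij] by simp
    then obtain u where u: "u \<in> A \<times> B" and fu: "(fst (f (x, b0)), c) = f u"
      by (rule imageE)
    obtain x' b where "u = (x', b)"
      by (cases u)
    with u fu have xb: "x' \<in> A" "b \<in> B" and fxb: "f (x', b) = (fst (f (x, b0)), c)"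
      by auto
    have "x' = x"
      using fibres[rule_format, of "(x', b)" "(x, b0)"] xb x b0 fxb by simp
    then show "c \<in> (\<lambda>b. snd (f (x, b))) ` B"
      using xb(2) fxb by (simp add: image_iff) (metis snd_conv)
  qed
qed

lemma bij_betw_fibrewise:
  assumes "\<And>x. x \<in> A \<Longrightarrow> bij_betw (g x) B B"
  shows "bij_betw (\<lambda>(x, b). (x, g x b)) (A \<times> B) (A \<times> B)"
proof (rule bij_betwI')
  show "(\<lambda>(x, b). (x, g x b)) u = (\<lambda>(x, b). (x, g x b)) v \<longleftrightarrow> u = v"
    if "u \<in> A \<times> B" "v \<in> A \<times> B" for u v
    using that assms by (auto dest: bij_betw_imp_inj_on inj_onD)
  show "(\<lambda>(x, b). (x, g x b)) u \<in> A \<times> B" if "u \<in> A \<times> B" for u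
    using that assms by (auto dest: bij_betwE)
  show "\<exists>u\<in>A \<times> B. w = (\<lambda>(x, b). (x, g x b)) u" if "w \<in> A \<times> B" for w
    using that assms by (fastforce dest: bij_betw_imp_surj_on)
qed

lemma cohomologous_to_trivial_iff:
  assumes closed: "\<forall>x\<in>Q. \<forall>y\<in>Q. m x y \<in> Q"
  shows "cohomologous_to_trivial Q m S \<theta> \<longleftrightarrow>
    (\<exists>\<delta>. (\<forall>x\<in>Q. \<delta> x permutes S) \<and> (\<forall>x\<in>Q. \<forall>y\<in>Q. \<delta> (m x y) \<circ> \<theta> x y = \<delta> y))"
proof
  assume "cohomologous_to_trivial Q m S \<theta>"
  then obtain \<gamma> where perm: "\<forall>x\<in>Q. \<gamma> x permutes S"
    and cob: "\<forall>x\<in>Q. \<forall>y\<in>Q. \<theta> x y = \<gamma> (m x y) \<circ> inv (\<gamma> y)"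
    unfolding cohomologous_to_trivial_def by blast
  have "inv (\<gamma> (m x y)) \<circ> \<theta> x y = inv (\<gamma> y)" if "x \<in> Q" "y \<in> Q" for x y
  proof -
    have "\<gamma> (m x y) permutes S"
      using perm closed that by blast
    then show ?thesis
      using cob that by (simp add: o_assoc permutes_inv_o)
  qed
  then show "\<exists>\<delta>. (\<forall>x\<in>Q. \<delta> x permutes S) \<and> (\<forall>x\<in>Q. \<forall>y\<in>Q. \<delta> (m x y) \<circ> \<theta> x y = \<delta> y)"
    using perm by (intro exI[of _ "\<lambda>x. inv (\<gamma> x)"]) (simp add: permutes_inv)
next
  assume "\<exists>\<delta>. (\<forall>x\<in>Q. \<delta> x permutes S) \<and> (\<forall>x\<in>Q. \<forall>y\<in>Q. \<delta> (m x y) \<circ> \<theta> x y = \<delta> y)"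
  then obtain \<delta> where perm: "\<forall>x\<in>Q. \<delta> x permutes S"
    and triv: "\<forall>x\<in>Q. \<forall>y\<in>Q. \<delta> (m x y) \<circ> \<theta> x y = \<delta> y"
    by blast
  have "\<theta> x y = inv (\<delta> (m x y)) \<circ> inv (inv (\<delta> y))" if "x \<in> Q" "y \<in> Q" for x y
  proof -
    have xy: "\<delta> (m x y) permutes S" "\<delta> y permutes S"
      using perm closed that by auto
    have "\<theta> x y = inv (\<delta> (m x y)) \<circ> (\<delta> (m x y) \<circ> \<theta> x y)"
      by (simp add: o_assoc permutes_inv_o(2)[OF xy(1)])
    also have "\<dots> = inv (\<delta> (m x y)) \<circ> inv (inv (\<delta> y))"
      using triv that by (simp add: permutes_inv_inv[OF xy(2)])
    finally show ?thesis .
  qed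
  then show "cohomologous_to_trivial Q m S \<theta>"
    unfolding cohomologous_to_trivial_def using perm
    by (intro exI[of _ "\<lambda>x. inv (\<delta> x)"]) (simp add: permutes_inv)
qed

lemma quandle_isomorphic_trivial_if_cohomologous:
  assumes "quandle Q m" and "cohomologous_to_trivial Q m S \<theta>"
  shows "quandle_isomorphic (Q \<times> S) (ext_op m \<theta>) (Q \<times> S) (ext_op m (\<lambda>x y. id))"
proof -
  have closed: "\<forall>x\<in>Q. \<forall>y\<in>Q. m x y \<in> Q"
    using assms(1) unfolding quandle_def by blast
  then obtain \<delta> where perm: "\<forall>x\<in>Q. \<delta> x permutes S"
    and triv: "\<forall>x\<in>Q. \<forall>y\<in>Q. \<delta> (m x y) \<circ> \<theta> x y = \<delta> y"
    using assms(2) cohomologous_to_trivial_iff by blast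
  define f where "f = (\<lambda>(x, b). (x, \<delta> x b))"
  have "bij_betw f (Q \<times> S) (Q \<times> S)"
    unfolding f_def using perm by (blast intro: bij_betw_fibrewise permutes_imp_bij)
  moreover have "f (ext_op m \<theta> u v) = ext_op m (\<lambda>x y. id) (f u) (f v)"
    if "u \<in> Q \<times> S" "v \<in> Q \<times> S" for u v
    using triv that by (auto simp: f_def ext_op_def fun_eq_iff split: prod.splits)
  ultimately show ?thesis
    unfolding quandle_isomorphic_def by blast
qed

lemma cohomologous_if_quandle_isomorphic_trivial:
  assumes quandle: "quandle Q m" and faithful: "faithful_quandle Q m"
    and cocycle: "quandle_cocycle Q m S \<theta>"
    and "quandle_isomorphic (Q \<times> S) (ext_op m \<theta>) (Q \<times> S) (ext_op m (\<lambda>x y. id))"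
  shows "cohomologous_to_trivial Q m S \<theta>"
proof -
  obtain f where bij: "bij_betw f (Q \<times> S) (Q \<times> S)"
    and hom: "\<forall>u\<in>Q \<times> S. \<forall>v\<in>Q \<times> S. f (ext_op m \<theta> u v) = ext_op m (\<lambda>x y. id) (f u) (f v)"
    using assms(4) unfolding quandle_isomorphic_def by blast
  have closed: "\<forall>x\<in>Q. \<forall>y\<in>Q. m x y \<in> Q"
    using quandle unfolding quandle_def by blast
  have \<theta>_perm: "\<theta> x y permutes S" if "x \<in> Q" "y \<in> Q" for x y
    using cocycle that unfolding quandle_cocycle_def by blast
  define \<delta> where "\<delta> x b = (if b \<in> S then snd (f (x, b)) else b)" for x b
  have "\<delta> x permutes S" if x: "x \<in> Q" for x
  proof (rule bij_imp_permutes)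
    have "bij_betw (\<lambda>b. snd (f (x, b))) S S"
      using bij_betw_snd_fibre[OF bij _ x]
        ext_op_iso_fst_eq_iff[OF quandle faithful cocycle faithful bij hom] by blast
    then show "bij_betw (\<delta> x) S S"
      by (rule bij_betw_cong[THEN iffD1, rotated]) (simp add: \<delta>_def)
  qed (simp add: \<delta>_def)
  moreover have "\<delta> (m x y) (\<theta> x y b) = \<delta> y b" if xy: "x \<in> Q" "y \<in> Q" for x y b
  proof (cases "b \<in> S")
    case True
    then have "f (m x y, \<theta> x y b) = ext_op m (\<lambda>x y. id) (f (x, b)) (f (y, b))"
      using hom xy by (metis ext_op_def fst_conv snd_conv mem_Sigma_iff)
    then show ?thesis
      using True permutes_in_image[OF \<theta>_perm[OF xy]] by (simp add: \<delta>_def ext_op_def)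
  next
    case False
    then show ?thesis
      using permutes_not_in[OF \<theta>_perm[OF xy]] by (simp add: \<delta>_def)
  qed
  ultimately show ?thesis
    using cohomologous_to_trivial_iff[OF closed] by (metis comp_apply ext)
qed

theorem lemma2p5:
  fixes Q :: "'a set" and m :: "'a \<Rightarrow> 'a \<Rightarrow> 'a"
    and S :: "'b set" and \<theta> :: "'a \<Rightarrow> 'a \<Rightarrow> 'b \<Rightarrow> 'b"
  assumes "quandle Q m" and "faithful_quandle Q m"
    and "quandle_cocycle Q m S \<theta>"
  shows "quandle_isomorphic (Q \<times> S) (ext_op m \<theta>) (Q \<times> S) (ext_op m (\<lambda>x y. id))
         \<longleftrightarrow> cohomologous_to_trivial Q m S \<theta>"
  using quandle_isomorphic_trivial_if_cohomologous cohomologous_if_quandle_isomorphic_trivial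
    assms by blast

end
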